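(* Let $f:\mathbb{N}^k\to\mathbb{N}$ with $k\ge1$. The following are equivalent: (a) $f\notin\mathscr{C}_{I_{\bar d=0}}$; (b) some shadow of $f$ is minimal; (c) some shadow of $f$ is bad; (d) some shadow of $f$ is not in $\mathscr{C}_{I_{\bar d=0}}$.
   Context: $\mathbb{N}=\{0,1,2,\dots\}$. For $A\subseteq\mathbb{N}$, $\bar d(A)=\limsup_{n\to\infty}\frac{|A\cap[0,n)|}{n}$. $\mathscr{C}_{I_{\bar d=0}}$ is the set of all finitary functions $f:\mathbb{N}^k\to\mathbb{N}$ ($k\ge1$) such that $\bar d(f[A^k])=0$ whenever $\bar d(A)=0$. For $f:\mathbb{N}^k\to\mathbb{N}$, a permutation $\pi$ of $\{1,\dots,k\}$ and $\bar a=(a_1,\dots,a_\ell)\in\mathbb{N}^\ell$ with $0\le\ell<k$, the shadow $f_{\pi,\bar a}$ is the $(k-\ell)$-ary function $(y_1,\dots,y_{k-\ell})\mapsto f_\pi(a_1,\dots,a_\ell,y_1,\dots,y_{k-\ell})$, where $f_\pi(x_1,\dots,x_k)=f(x_{\pi(1)},\dots,x_{\pi(k)})$. The shadows with $\ell>0$ are proper; those with $\ell=0$ (the functions $f_\pi$, including $f$ itself) are improper; "shadow" means proper or improper shadow. $f$ is minimal if $f\notin\mathscr{C}_{I_{\bar d=0}}$ and every proper shadow of $f$ lies in $\mathscr{C}_{I_{\bar d=0}}$. $f$ is bad if there exists a rational $\varepsilon>0$ such that for every $i\in\mathbb{N}$ there are $n,t\ge i$ and $A\subseteq[i,n)$ with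 $|A\cap[0,r)|\le\frac{r}{2^i}$ for all $r\in\mathbb{N}$ and $|f[A^k]\cap[0,t)|\ge\varepsilon t$. *)

theory Defs
  imports Complex_Main "HOL-Library.Extended_Real" "HOL-Library.Liminf_Limsup" "HOL-Combinatorics.Permutations"
begin

text \<open>A k-ary function N^k -> N is represented by a function on lists; only its
values on lists of length k matter.\<close>

definition upper_density :: "nat set \<Rightarrow> ereal" where
  "upper_density A = limsup (\<lambda>n. ereal (real (card (A \<inter> {..<n})) / real n))"

definition tuples :: "nat \<Rightarrow> nat set \<Rightarrow> nat list set" where
  "tuples k A = {xs. length xs = k \<and> set xs \<subseteq> A}"

definition img :: "nat \<Rightarrow> (nat list \<Rightarrow> nat) \<Rightarrow> nat set \<Rightarrow> nat set" where
  "img k f A = f ` tuples k A"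

definition in_C :: "nat \<Rightarrow> (nat list \<Rightarrow> nat) \<Rightarrow> bool" where
  "in_C k f \<longleftrightarrow> k \<ge> 1 \<and>
     (\<forall>A. upper_density A = 0 \<longrightarrow> upper_density (img k f A) = 0)"

text \<open>f_pi (x_1..x_k) = f (x_{pi 1}, ..., x_{pi k}), with 0-based indices.\<close>
definition perm_fun :: "nat \<Rightarrow> (nat \<Rightarrow> nat) \<Rightarrow> (nat list \<Rightarrow> nat) \<Rightarrow> nat list \<Rightarrow> nat" where
  "perm_fun k \<pi> f xs = f (map (\<lambda>i. xs ! \<pi> i) [0..<k])"

definition shadow_l :: "nat \<Rightarrow> (nat list \<Rightarrow> nat) \<Rightarrow> nat \<Rightarrow> (nat list \<Rightarrow> nat) \<Rightarrow> nat \<Rightarrow> bool" where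
  "shadow_l k f m g l \<longleftrightarrow> (\<exists>\<pi> as. \<pi> permutes {..<k} \<and> length as = l \<and> l < k \<and>
       m = k - l \<and> g = (\<lambda>ys. perm_fun k \<pi> f (as @ ys)))"

definition shadow :: "nat \<Rightarrow> (nat list \<Rightarrow> nat) \<Rightarrow> nat \<Rightarrow> (nat list \<Rightarrow> nat) \<Rightarrow> bool" where
  "shadow k f m g \<longleftrightarrow> (\<exists>l. shadow_l k f m g l)"

definition proper_shadow :: "nat \<Rightarrow> (nat list \<Rightarrow> nat) \<Rightarrow> nat \<Rightarrow> (nat list \<Rightarrow> nat) \<Rightarrow> bool" where
  "proper_shadow k f m g \<longleftrightarrow> (\<exists>l>0. shadow_l k f m g l)"

definition minimal :: "nat \<Rightarrow> (nat list \<Rightarrow> nat) \<Rightarrow> bool" where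
  "minimal k f \<longleftrightarrow> \<not> in_C k f \<and> (\<forall>m g. proper_shadow k f m g \<longrightarrow> in_C m g)"

definition bad :: "nat \<Rightarrow> (nat list \<Rightarrow> nat) \<Rightarrow> bool" where
  "bad k f \<longleftrightarrow> (\<exists>\<epsilon>::real. \<epsilon> \<in> \<rat> \<and> \<epsilon> > 0 \<and>
     (\<forall>i::nat. \<exists>n t A. n \<ge> i \<and> t \<ge> i \<and> A \<subseteq> {i..<n} \<and>
        (\<forall>r::nat. real (card (A \<inter> {..<r})) \<le> real r / 2 ^ i) \<and>
        real (card (img k f A \<inter> {..<t})) \<ge> \<epsilon> * real t))"

end

theory Submission
  imports Defs
begin

text \<open>
  If f is outside the clone, take among its shadows outside the clone one that fixes as many
  arguments as possible; since a shadow of a shadow is a shadow, it is minimal.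
  If g is minimal and A has density zero while g[A^m] has not, then the values of g at tuples
  with an entry below N are values of proper shadows of g on A, hence form a set of density
  zero. So the tuples from A \<inter> [N, \<infinity>) still produce a positive proportion of values,
  uniformly in N; cutting A \<inter> [N, \<infinity>) down to a finite window yields the sparse witnesses
  that make g bad. Conversely, gluing the witnesses of badness along a fast growing sequence
  of indices gives a single set of density zero whose image has positive upper density, and a
  shadow outside the clone forces f outside, as g[A^m] \<subseteq> f[(A \<union> F)^k] for the finite set F
  of fixed arguments.
\<close>

section \<open>Sets of density zero\<close>

abbreviation count_below :: "nat set \<Rightarrow> nat \<Rightarrow> real" where
  "count_below A r \<equiv> real (card (A \<inter> {..<r}))"

definition density_zero :: "nat set \<Rightarrow> bool" where
  "density_zero A \<longleftrightarrow> (\<forall>e>0. \<exists>R. \<forall>r\<ge>R. count_below A r \<le> e * real r)"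

lemma density_zero_iff_tendsto:
  "density_zero A \<longleftrightarrow> (\<lambda>n. count_below A n / real n) \<longlonglongrightarrow> 0"
proof
  assume A: "density_zero A"
  show "(\<lambda>n. count_below A n / real n) \<longlonglongrightarrow> 0"
  proof (rule LIMSEQ_I)
    fix e :: real assume "e > 0"
    then obtain R where R: "\<forall>r\<ge>R. count_below A r \<le> e / 2 * real r"
      using A unfolding density_zero_def by (meson half_gt_zero)
    have "norm (count_below A n / real n) < e" if "n \<ge> Suc R" for n
    proof -
      have "count_below A n / real n \<le> e / 2"
        using R that by (simp add: divide_le_eq)
      moreover have "count_below A n / real n \<ge> 0" by simp
      ultimately show ?thesis using \<open>e > 0\<close> by (simp only: real_norm_def)
    qed
    then show "\<exists>no. \<forall>n\<ge>no. norm (count_below A n / real n - 0) < e" by auto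
  qed
next
  assume lim: "(\<lambda>n. count_below A n / real n) \<longlonglongrightarrow> 0"
  show "density_zero A" unfolding density_zero_def
  proof (intro allI impI)
    fix e :: real assume "e > 0"
    then obtain R where R: "\<forall>n\<ge>R. norm (count_below A n / real n - 0) < e"
      using lim unfolding LIMSEQ_iff by blast
    have "count_below A r \<le> e * real r" if "r \<ge> R" for r
    proof (cases "r = 0")
      case False
      then show ?thesis using R that by (simp add: divide_less_eq less_imp_le)
    qed simp
    then show "\<exists>R. \<forall>r\<ge>R. count_below A r \<le> e * real r" by blast
  qed
qed

lemma upper_density_eq_0_iff: "upper_density A = 0 \<longleftrightarrow> density_zero A"
proof -
  let ?a = "\<lambda>n. ereal (count_below A n / real n)"
  have liminf_bounds: "0 \<le> liminf ?a" "liminf ?a \<le> limsup ?a"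
    by (auto intro: Liminf_bounded Liminf_le_Limsup)
  have "limsup ?a = 0 \<longleftrightarrow> ?a \<longlonglongrightarrow> ereal 0"
  proof
    assume "limsup ?a = 0"
    with liminf_bounds have "liminf ?a = 0" by auto
    with \<open>limsup ?a = 0\<close> show "?a \<longlonglongrightarrow> ereal 0"
      by (intro Liminf_eq_Limsup) (auto simp: zero_ereal_def)
  next
    assume "?a \<longlonglongrightarrow> ereal 0"
    then show "limsup ?a = 0" by (simp add: lim_imp_Limsup zero_ereal_def)
  qed
  then show ?thesis
    unfolding upper_density_def density_zero_iff_tendsto by simp
qed

lemma in_C_iff_density_zero:
  "in_C k f \<longleftrightarrow> k \<ge> 1 \<and> (\<forall>A. density_zero A \<longrightarrow> density_zero (img k f A))"
  unfolding in_C_def upper_density_eq_0_iff ..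

lemma count_below_mono: "B \<subseteq> A \<Longrightarrow> count_below B r \<le> count_below A r"
  by (intro of_nat_mono card_mono) auto

lemma count_below_Un: "count_below (A \<union> B) r \<le> count_below A r + count_below B r"
proof -
  have "(A \<union> B) \<inter> {..<r} = (A \<inter> {..<r}) \<union> (B \<inter> {..<r})" by auto
  then show ?thesis by (metis card_Un_le of_nat_add of_nat_mono)
qed

lemma density_zero_subset:
  assumes "density_zero A" and "B \<subseteq> A"
  shows "density_zero B"
  unfolding density_zero_def
proof (intro allI impI)
  fix e :: real assume "e > 0"
  then obtain R where "\<forall>r\<ge>R. count_below A r \<le> e * real r"
    using assms(1) unfolding density_zero_def by blast
  then show "\<exists>R. \<forall>r\<ge>R. count_below B r \<le> e * real r"
    using count_below_mono[OF assms(2)] order_trans by blast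
qed

lemma density_zero_Un:
  assumes A: "density_zero A" and B: "density_zero B"
  shows "density_zero (A \<union> B)"
  unfolding density_zero_def
proof (intro allI impI)
  fix e :: real assume "e > 0"
  then obtain R1 R2 where
      R1: "\<forall>r\<ge>R1. count_below A r \<le> e / 2 * real r" and
      R2: "\<forall>r\<ge>R2. count_below B r \<le> e / 2 * real r"
    using A B unfolding density_zero_def by (meson half_gt_zero)
  have "count_below (A \<union> B) r \<le> e * real r" if "r \<ge> max R1 R2" for r
  proof -
    have "count_below A r \<le> e / 2 * real r" "count_below B r \<le> e / 2 * real r"
      using R1 R2 that by simp_all
    then show ?thesis using count_below_Un[of A B r] by linarith
  qed
  then show "\<exists>R. \<forall>r\<ge>R. count_below (A \<union> B) r \<le> e * real r" by blast
qed

lemma density_zero_finite: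
  assumes "finite F"
  shows "density_zero F"
  unfolding density_zero_def
proof (intro allI impI)
  fix e :: real assume "e > 0"
  have "count_below F r \<le> e * real r" if "r \<ge> nat \<lceil>real (card F) / e\<rceil>" for r
  proof -
    have "count_below F r \<le> real (card F)" using assms by (intro of_nat_mono card_mono) auto
    also have "\<dots> \<le> e * real r" using that \<open>e > 0\<close> by (simp add: divide_le_eq mult.commute)
    finally show ?thesis .
  qed
  then show "\<exists>R. \<forall>r\<ge>R. count_below F r \<le> e * real r" by blast
qed

lemma density_zero_UN:
  "finite I \<Longrightarrow> (\<And>i. i \<in> I \<Longrightarrow> density_zero (B i)) \<Longrightarrow> density_zero (\<Union>i\<in>I. B i)"
  by (induction I rule: finite_induct) (auto intro: density_zero_Un density_zero_finite)

lemma not_density_zero_iff: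
  "\<not> density_zero A \<longleftrightarrow> (\<exists>d>0. \<forall>i. \<exists>t\<ge>i. d * real t \<le> count_below A t)"
proof
  assume "\<not> density_zero A"
  then obtain d where "d > 0" "\<forall>i. \<exists>t\<ge>i. d * real t < count_below A t"
    unfolding density_zero_def by (meson not_le)
  then show "\<exists>d>0. \<forall>i. \<exists>t\<ge>i. d * real t \<le> count_below A t" by (meson less_imp_le)
next
  assume "\<exists>d>0. \<forall>i. \<exists>t\<ge>i. d * real t \<le> count_below A t"
  then obtain d where d: "d > 0" and freq: "\<forall>i. \<exists>t\<ge>i. d * real t \<le> count_below A t" by blast
  show "\<not> density_zero A"
  proof
    assume "density_zero A"
    then obtain R where R: "\<forall>r\<ge>R. count_below A r \<le> d / 2 * real r"
      unfolding density_zero_def using d by (meson half_gt_zero)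
    obtain t where "t \<ge> Suc R" and "d * real t \<le> count_below A t" using freq by blast
    moreover have "count_below A t \<le> d / 2 * real t" using R \<open>t \<ge> Suc R\<close> by simp
    moreover have "d * real t > 0" using d \<open>t \<ge> Suc R\<close> by simp
    ultimately show False by linarith
  qed
qed

section \<open>Shadows\<close>

lemma tuples_mono: "A \<subseteq> B \<Longrightarrow> tuples k A \<subseteq> tuples k B"
  unfolding tuples_def by auto

lemma img_mono: "A \<subseteq> B \<Longrightarrow> img k f A \<subseteq> img k f B"
  unfolding img_def using tuples_mono by blast

lemma img_cong: "(\<And>xs. length xs = k \<Longrightarrow> g xs = f xs) \<Longrightarrow> img k g A = img k f A"
  unfolding img_def tuples_def by (intro image_cong) auto

lemma img_shadow_l_subset:
  assumes "shadow_l k f m g l"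
  obtains F where "finite F" and "\<And>A. img m g A \<subseteq> img k f (A \<union> F)"
proof -
  obtain \<pi> as where \<pi>: "\<pi> permutes {..<k}" and "length as = l" "l < k" "m = k - l"
    and g: "g = (\<lambda>ys. perm_fun k \<pi> f (as @ ys))"
    using assms unfolding shadow_l_def by blast
  have "img m g A \<subseteq> img k f (A \<union> set as)" for A
  proof
    fix y assume "y \<in> img m g A"
    then obtain ys where "ys \<in> tuples m A" and y: "y = g ys" unfolding img_def by blast
    then have ys: "length ys = m" "set ys \<subseteq> A" unfolding tuples_def by auto
    let ?xs = "map (\<lambda>i. (as @ ys) ! \<pi> i) [0..<k]"
    have "set ?xs \<subseteq> set (as @ ys)"
    proof
      fix x assume "x \<in> set ?xs"
      then obtain i where "i < k" and x: "x = (as @ ys) ! \<pi> i" by auto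
      then have "\<pi> i < length (as @ ys)"
        using permutes_in_image[OF \<pi>] ys(1) \<open>length as = l\<close> \<open>l < k\<close> \<open>m = k - l\<close> by simp
      then show "x \<in> set (as @ ys)" unfolding x by (rule nth_mem)
    qed
    then have "?xs \<in> tuples k (A \<union> set as)" using ys(2) unfolding tuples_def by auto
    moreover have "y = f ?xs" unfolding y g perm_fun_def by simp
    ultimately show "y \<in> img k f (A \<union> set as)" unfolding img_def by blast
  qed
  with that show thesis by blast
qed

lemma shadow_l_not_in_C:
  assumes "shadow_l k f m g l" and "\<not> in_C m g"
  shows "\<not> in_C k f"
proof -
  obtain F where "finite F" and img_sub: "\<And>A. img m g A \<subseteq> img k f (A \<union> F)"
    using img_shadow_l_subset[OF assms(1)] by blast
  have "m \<ge> 1" using assms(1) unfolding shadow_l_def by auto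
  then obtain A where "density_zero A" and "\<not> density_zero (img m g A)"
    using assms(2) unfolding in_C_iff_density_zero by blast
  have "density_zero (A \<union> F)"
    using \<open>density_zero A\<close> \<open>finite F\<close> by (rule density_zero_Un[OF _ density_zero_finite])
  moreover have "\<not> density_zero (img k f (A \<union> F))"
    using \<open>\<not> density_zero (img m g A)\<close> img_sub density_zero_subset by blast
  ultimately show ?thesis unfolding in_C_iff_density_zero by blast
qed

lemma shadow_l_self:
  assumes "k \<ge> 1"
  shows "shadow_l k f k (perm_fun k id f) 0"
  unfolding shadow_l_def using assms by (intro exI[of _ id] exI[of _ "[]"]) (simp add: permutes_id)

lemma in_C_perm_fun_id: "in_C k (perm_fun k id f) \<longleftrightarrow> in_C k f"
proof -
  have "perm_fun k id f xs = f xs" if "length xs = k" for xs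
    unfolding perm_fun_def using map_nth[of xs] that by simp
  then have "img k (perm_fun k id f) A = img k f A" for A by (rule img_cong)
  then show ?thesis unfolding in_C_def by simp
qed

definition perm_shift :: "nat \<Rightarrow> (nat \<Rightarrow> nat) \<Rightarrow> nat \<Rightarrow> nat" where
  "perm_shift l \<sigma> x = (if x < l then x else l + \<sigma> (x - l))"

lemma perm_shift_permutes:
  assumes \<sigma>: "\<sigma> permutes {..<m}"
  shows "perm_shift l \<sigma> permutes {..<l + m}"
proof (rule bij_imp_permutes)
  have inj: "inj_on (perm_shift l \<sigma>) {..<l + m}"
  proof (rule inj_onI)
    fix x y assume eq: "perm_shift l \<sigma> x = perm_shift l \<sigma> y"
    show "x = y"
    proof (cases "x < l"; cases "y < l")
      assume "\<not> x < l" "\<not> y < l"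
      with eq have "\<sigma> (x - l) = \<sigma> (y - l)" unfolding perm_shift_def by simp
      then have "x - l = y - l" using permutes_inj[OF \<sigma>] by (simp add: inj_eq)
      with \<open>\<not> x < l\<close> \<open>\<not> y < l\<close> show ?thesis by simp
    qed (use eq in \<open>auto simp: perm_shift_def\<close>)
  qed
  have "perm_shift l \<sigma> x < l + m" if "x < l + m" for x
    using that permutes_in_image[OF \<sigma>, of "x - l"] by (auto simp: perm_shift_def)
  then have "perm_shift l \<sigma> ` {..<l + m} \<subseteq> {..<l + m}" by auto
  with inj have "perm_shift l \<sigma> ` {..<l + m} = {..<l + m}"
    by (intro endo_inj_surj) auto
  with inj show "bij_betw (perm_shift l \<sigma>) {..<l + m} {..<l + m}"
    unfolding bij_betw_def by simp
next
  fix x assume "x \<notin> {..<l + m}"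
  then show "perm_shift l \<sigma> x = x"
    using permutes_not_in[OF \<sigma>, of "x - l"] by (simp add: perm_shift_def)
qed

lemma nth_append_map_perm_shift:
  assumes "length as = l" and "x < l + m"
  shows "(as @ map (\<lambda>j. zs ! \<sigma> j) [0..<m]) ! x = (as @ zs) ! perm_shift l \<sigma> x"
  using assms by (cases "x < l") (auto simp: perm_shift_def nth_append)

lemma shadow_l_trans:
  assumes "shadow_l k f m g l" and "shadow_l m g m' h l'"
  shows "shadow_l k f m' h (l + l')"
proof -
  obtain \<pi> as where \<pi>: "\<pi> permutes {..<k}" and las: "length as = l" and "l < k" "m = k - l"
    and g: "g = (\<lambda>ys. perm_fun k \<pi> f (as @ ys))"
    using assms(1) unfolding shadow_l_def by blast
  obtain \<sigma> bs where \<sigma>: "\<sigma> permutes {..<m}" and "length bs = l'" "l' < m" "m' = m - l'"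
    and h: "h = (\<lambda>zs. perm_fun m \<sigma> g (bs @ zs))"
    using assms(2) unfolding shadow_l_def by blast
  have k: "k = l + m" using \<open>l < k\<close> \<open>m = k - l\<close> by simp
  let ?\<rho> = "perm_shift l \<sigma> \<circ> \<pi>"
  have "perm_shift l \<sigma> permutes {..<k}" using perm_shift_permutes[OF \<sigma>] k by simp
  with \<pi> have \<rho>: "?\<rho> permutes {..<k}" by (rule permutes_compose)
  have \<pi>_range: "\<pi> i < l + m" if "i < k" for i using permutes_in_image[OF \<pi>] that k by simp
  have "h zs = perm_fun k ?\<rho> f ((as @ bs) @ zs)" for zs
    unfolding h g perm_fun_def
    by (intro arg_cong[where f = f] map_cong refl) (simp add: nth_append_map_perm_shift[OF las] \<pi>_range)
  then have "h = (\<lambda>zs. perm_fun k ?\<rho> f ((as @ bs) @ zs))" ..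
  with \<rho> show ?thesis unfolding shadow_l_def
    using \<open>length bs = l'\<close> \<open>l' < m\<close> \<open>m' = m - l'\<close> las k
    by (intro exI[of _ ?\<rho>] exI[of _ "as @ bs"]) simp
qed

lemma exists_minimal_shadow:
  assumes "k \<ge> 1" and "\<not> in_C k f"
  shows "\<exists>m g. shadow k f m g \<and> minimal m g"
proof -
  define L where "L = {l. \<exists>m g. shadow_l k f m g l \<and> \<not> in_C m g}"
  have "0 \<in> L"
    using shadow_l_self[OF assms(1)] assms(2) in_C_perm_fun_id unfolding L_def by blast
  have "finite L" by (rule finite_subset[of _ "{..<k}"]) (auto simp: L_def shadow_l_def)
  define l where "l = Max L"
  have "l \<in> L" unfolding l_def using \<open>finite L\<close> \<open>0 \<in> L\<close> by (intro Max_in) auto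
  then obtain m g where sh: "shadow_l k f m g l" and "\<not> in_C m g" unfolding L_def by blast
  have "in_C m' h" if "l' > 0" and sh': "shadow_l m g m' h l'" for m' h l'
  proof (rule ccontr)
    assume "\<not> in_C m' h"
    then have "l + l' \<in> L" using shadow_l_trans[OF sh sh'] unfolding L_def by blast
    then have "l + l' \<le> l" unfolding l_def by (rule Max_ge[OF \<open>finite L\<close>])
    with \<open>l' > 0\<close> show False by simp
  qed
  with sh \<open>\<not> in_C m g\<close> show ?thesis unfolding shadow_def minimal_def proper_shadow_def by blast
qed

section \<open>Minimal functions are bad\<close>

definition insert_at :: "nat \<Rightarrow> 'a \<Rightarrow> 'a list \<Rightarrow> 'a list" where
  "insert_at p a ys = take p ys @ a # drop p ys"

definition move_first_to :: "nat \<Rightarrow> nat \<Rightarrow> nat" where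
  "move_first_to p i = (if i < p then i + 1 else if i = p then 0 else i)"

lemma move_first_to_permutes:
  assumes "p < m"
  shows "move_first_to p permutes {..<m}"
proof (rule bij_imp_permutes)
  have inj: "inj_on (move_first_to p) {..<m}"
    by (rule inj_onI) (auto simp: move_first_to_def split: if_splits)
  have "move_first_to p ` {..<m} \<subseteq> {..<m}" using assms by (auto simp: move_first_to_def)
  with inj have "move_first_to p ` {..<m} = {..<m}" by (intro endo_inj_surj) auto
  with inj show "bij_betw (move_first_to p) {..<m} {..<m}" unfolding bij_betw_def by simp
next
  fix x assume "x \<notin> {..<m}"
  then show "move_first_to p x = x" using assms by (auto simp: move_first_to_def)
qed

lemma perm_fun_move_first_to:
  assumes "p < m" and "length ys = m - 1"
  shows "perm_fun m (move_first_to p) g (a # ys) = g (insert_at p a ys)"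
proof -
  have "map (\<lambda>i. (a # ys) ! move_first_to p i) [0..<m] = insert_at p a ys"
  proof (rule nth_equalityI)
    fix i assume "i < length (map (\<lambda>i. (a # ys) ! move_first_to p i) [0..<m])"
    with assms show "map (\<lambda>i. (a # ys) ! move_first_to p i) [0..<m] ! i = insert_at p a ys ! i"
      by (cases i p rule: linorder_cases)
        (auto simp: move_first_to_def insert_at_def nth_append min_def nth_Cons')
  qed (use assms in \<open>simp add: insert_at_def\<close>)
  then show ?thesis unfolding perm_fun_def by simp
qed

lemma proper_shadow_insert_at:
  assumes "p < m" and "1 < m"
  obtains h where "proper_shadow m g (m - 1) h"
    and "\<And>ys. length ys = m - 1 \<Longrightarrow> h ys = g (insert_at p a ys)"
proof
  let ?h = "\<lambda>ys. perm_fun m (move_first_to p) g ([a] @ ys)"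
  show "proper_shadow m g (m - 1) ?h"
    unfolding proper_shadow_def shadow_l_def using assms move_first_to_permutes[OF assms(1)]
    by (intro exI[of _ 1] conjI exI[of _ "move_first_to p"] exI[of _ "[a]"]) auto
  show "?h ys = g (insert_at p a ys)" if "length ys = m - 1" for ys
    using perm_fun_move_first_to[OF assms(1) that] by simp
qed

lemma minimal_insert_at_density_zero:
  assumes "minimal m g" and "density_zero A" and "p < m"
  shows "density_zero ((\<lambda>ys. g (insert_at p a ys)) ` tuples (m - 1) A)"
proof (cases "m = 1")
  case True
  then have "tuples (m - 1) A = {[]}" unfolding tuples_def by auto
  then show ?thesis by (intro density_zero_finite) simp
next
  case False
  with assms(3) have "1 < m" by simp
  then obtain h where h: "proper_shadow m g (m - 1) h"
    and h_eq: "\<And>ys. length ys = m - 1 \<Longrightarrow> h ys = g (insert_at p a ys)"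
    using proper_shadow_insert_at[OF assms(3)] by metis
  then have "in_C (m - 1) h" using assms(1) unfolding minimal_def by blast
  then have "density_zero (img (m - 1) h A)" using assms(2) unfolding in_C_iff_density_zero by blast
  moreover have "img (m - 1) h A = (\<lambda>ys. g (insert_at p a ys)) ` tuples (m - 1) A"
    unfolding img_def tuples_def using h_eq by (intro image_cong) auto
  ultimately show ?thesis by simp
qed

lemma tuples_insert_at_small_entry:
  assumes "xs \<in> tuples m A" and "\<not> set xs \<subseteq> {N..}"
  shows "\<exists>p<m. \<exists>a<N. \<exists>ys\<in>tuples (m - 1) A. xs = insert_at p a ys"
proof -
  have lx: "length xs = m" and sx: "set xs \<subseteq> A" using assms(1) unfolding tuples_def by auto
  obtain p where p: "p < m" "xs ! p < N"
    using assms(2) lx by (auto simp: subset_iff in_set_conv_nth not_le)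
  define ys where "ys = take p xs @ drop (Suc p) xs"
  have "ys \<in> tuples (m - 1) A"
    unfolding tuples_def ys_def using sx p lx by (auto dest: in_set_takeD in_set_dropD)
  moreover have "xs = insert_at p (xs ! p) ys"
    unfolding insert_at_def ys_def using p lx by (simp add: id_take_nth_drop[symmetric])
  ultimately show ?thesis using p by blast
qed

lemma img_subset_img_atLeast_Un:
  "img m g A \<subseteq>
     img m g (A \<inter> {N..}) \<union> (\<Union>p<m. \<Union>a<N. (\<lambda>ys. g (insert_at p a ys)) ` tuples (m - 1) A)"
proof
  fix y assume "y \<in> img m g A"
  then obtain xs where xs: "xs \<in> tuples m A" and y: "y = g xs" unfolding img_def by blast
  show "y \<in> img m g (A \<inter> {N..}) \<union> (\<Union>p<m. \<Union>a<N. (\<lambda>ys. g (insert_at p a ys)) ` tuples (m - 1) A)"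
  proof (cases "set xs \<subseteq> {N..}")
    case True
    then have "xs \<in> tuples m (A \<inter> {N..})" using xs unfolding tuples_def by auto
    then show ?thesis using y unfolding img_def by blast
  next
    case False
    then show ?thesis using tuples_insert_at_small_entry[OF xs] y by blast
  qed
qed

lemma minimal_img_atLeast_dense:
  assumes "minimal m g" and "density_zero A" and "\<not> density_zero (img m g A)"
  obtains d where "d > 0" and "\<And>N i. \<exists>t\<ge>i. d * real t \<le> count_below (img m g (A \<inter> {N..})) t"
proof -
  obtain d where "d > 0" and dense: "\<forall>i. \<exists>t\<ge>i. d * real t \<le> count_below (img m g A) t"
    using assms(3) unfolding not_density_zero_iff by blast
  have "\<exists>t\<ge>i. d / 2 * real t \<le> count_below (img m g (A \<inter> {N..})) t" for N i
  proof -
    let ?E = "\<Union>p<m. \<Union>a<N. (\<lambda>ys. g (insert_at p a ys)) ` tuples (m - 1) A"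
    have "density_zero ?E"
      using minimal_insert_at_density_zero[OF assms(1,2)] by (intro density_zero_UN) auto
    then obtain R where R: "\<forall>r\<ge>R. count_below ?E r \<le> d / 2 * real r"
      unfolding density_zero_def using \<open>d > 0\<close> by (meson half_gt_zero)
    obtain t where t: "t \<ge> max i R" "d * real t \<le> count_below (img m g A) t"
      using dense by blast
    have "count_below (img m g A) t \<le> count_below (img m g (A \<inter> {N..}) \<union> ?E) t"
      by (rule count_below_mono[OF img_subset_img_atLeast_Un])
    also have "\<dots> \<le> count_below (img m g (A \<inter> {N..})) t + count_below ?E t"
      by (rule count_below_Un)
    finally show ?thesis using t R by (intro exI[of _ t]) auto
  qed
  with \<open>d > 0\<close> show thesis using that[of "d / 2"] by simp
qed

lemma img_Int_lessThan_subset_img_bounded: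
  "\<exists>n. img k f A \<inter> {..<t} \<subseteq> img k f (A \<inter> {..<n})"
proof -
  have "finite (img k f A \<inter> {..<t})" and "img k f A \<inter> {..<t} \<subseteq> f ` tuples k A"
    unfolding img_def by auto
  then obtain C where C: "C \<subseteq> tuples k A" "finite C" "img k f A \<inter> {..<t} = f ` C"
    by (meson finite_subset_image)
  have "finite (\<Union> (set ` C))" using C(2) by simp
  then obtain n where "\<Union> (set ` C) \<subseteq> {..<n}" using finite_nat_iff_bounded by blast
  with C(1) have "C \<subseteq> tuples k (A \<inter> {..<n})" unfolding tuples_def by auto
  with C(3) show ?thesis unfolding img_def by blast
qed

lemma density_zero_imp_sparse_tail:
  assumes "density_zero A" and "c > 0"
  obtains N where "N \<ge> i" and "\<And>B r. B \<subseteq> A \<inter> {N..} \<Longrightarrow> count_below B r \<le> c * real r"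
proof -
  obtain R where R: "\<forall>r\<ge>R. count_below A r \<le> c * real r"
    using assms unfolding density_zero_def by blast
  have "count_below B r \<le> c * real r" if B: "B \<subseteq> A \<inter> {max i R..}" for B r
  proof (cases "r \<le> max i R")
    case True
    with B have "B \<inter> {..<r} = {}" by auto
    then show ?thesis using assms(2) by simp
  next
    case False
    then have "count_below B r \<le> count_below A r" using B by (intro count_below_mono) auto
    also have "\<dots> \<le> c * real r" using R False by simp
    finally show ?thesis .
  qed
  then show thesis using that[of "max i R"] by simp
qed

lemma minimal_imp_bad:
  assumes "m \<ge> 1" and "minimal m g"
  shows "bad m g"
proof -
  obtain A where A: "density_zero A" and "\<not> density_zero (img m g A)"
    using assms unfolding minimal_def in_C_iff_density_zero by blast
  then obtain d where "d > 0"
    and dense: "\<And>N i. \<exists>t\<ge>i. d * real t \<le> count_below (img m g (A \<inter> {N..})) t"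
    using minimal_img_atLeast_dense[OF assms(2)] by blast
  obtain \<epsilon> where "\<epsilon> \<in> \<rat>" "0 < \<epsilon>" "\<epsilon> < d" using Rats_dense_in_real[of 0 d] \<open>d > 0\<close> by auto
  have "\<exists>n t A'. n \<ge> i \<and> t \<ge> i \<and> A' \<subseteq> {i..<n} \<and>
      (\<forall>r. count_below A' r \<le> real r / 2 ^ i) \<and> \<epsilon> * real t \<le> count_below (img m g A') t" for i
  proof -
    obtain N where "N \<ge> i" and sparse: "\<And>B r. B \<subseteq> A \<inter> {N..} \<Longrightarrow> count_below B r \<le> 1 / 2 ^ i * real r"
      by (rule density_zero_imp_sparse_tail[OF A, of "1 / 2 ^ i" i]) auto
    obtain t where "t \<ge> i" and t: "d * real t \<le> count_below (img m g (A \<inter> {N..})) t"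
      using dense by blast
    obtain n where n: "img m g (A \<inter> {N..}) \<inter> {..<t} \<subseteq> img m g (A \<inter> {N..} \<inter> {..<n})"
      using img_Int_lessThan_subset_img_bounded by blast
    define A' where "A' = A \<inter> {N..} \<inter> {..<max n i}"
    have "img m g (A \<inter> {N..} \<inter> {..<n}) \<subseteq> img m g A'"
      unfolding A'_def by (rule img_mono) auto
    with n have "img m g (A \<inter> {N..}) \<inter> {..<t} \<subseteq> img m g A' \<inter> {..<t}" by blast
    then have "count_below (img m g (A \<inter> {N..})) t \<le> count_below (img m g A') t"
      by (intro of_nat_mono card_mono) auto
    moreover have "\<epsilon> * real t \<le> d * real t" using \<open>\<epsilon> < d\<close> by (intro mult_right_mono) auto
    moreover have "A' \<subseteq> {i..<max n i}" using \<open>N \<ge> i\<close> unfolding A'_def by auto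
    moreover have "count_below A' r \<le> real r / 2 ^ i" for r
      using sparse[of A' r] unfolding A'_def by auto
    ultimately show ?thesis using \<open>t \<ge> i\<close> t by (intro exI[of _ "max n i"] exI[of _ t] exI[of _ A']) auto
  qed
  with \<open>\<epsilon> \<in> \<rat>\<close> \<open>0 < \<epsilon>\<close> show ?thesis unfolding bad_def by blast
qed

section \<open>Bad functions are not in the clone\<close>

context
  fixes s b :: "nat \<Rightarrow> nat" and P :: "nat \<Rightarrow> nat set"
  assumes s_mono: "strict_mono s"
    and s_le_b: "\<And>j. s j \<le> b j"
    and P_block: "\<And>j. P j \<subseteq> {s j..<b j}"
    and block_gap: "\<And>j. 2 ^ Suc j * b j \<le> s (Suc j)"
    and P_sparse: "\<And>j r. count_below (P j) r \<le> real r / 2 ^ j"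
begin

lemma card_UN_blocks: "real (card (\<Union>j<J. P j)) * 2 ^ J \<le> real (s J)"
proof (cases J)
  case (Suc J')
  have b_le: "b j \<le> b J'" if "j \<le> J'" for j
  proof (cases "j = J'")
    case False
    with that have "b j \<le> s (Suc j)" "s (Suc j) \<le> s J'"
      using block_gap[of j] strict_mono_leD[OF s_mono] by (auto intro: order_trans[OF _ block_gap])
    then show ?thesis using s_le_b[of J'] by linarith
  qed simp
  have "(\<Union>j<J. P j) \<subseteq> {..<b J'}"
  proof (intro UN_least)
    fix j assume "j \<in> {..<J}"
    then have "b j \<le> b J'" using b_le Suc by simp
    then show "P j \<subseteq> {..<b J'}" using P_block[of j] by auto
  qed
  then have "card (\<Union>j<J. P j) \<le> b J'" by (metis card_lessThan card_mono finite_lessThan)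
  then have "real (card (\<Union>j<J. P j)) * 2 ^ J \<le> real (b J') * 2 ^ J"
    by (intro mult_right_mono) auto
  also have "\<dots> \<le> real (s J)"
  proof -
    have "b J' * 2 ^ J \<le> s J" using block_gap[of J'] Suc by (simp add: mult.commute)
    then show ?thesis by (metis of_nat_le_iff of_nat_mult of_nat_numeral of_nat_power)
  qed
  finally show ?thesis .
qed simp

text \<open>Below r only the last block starting below r and the blocks before it meet the set,
  and the earlier blocks together are negligible by the gap condition.\<close>
lemma count_below_Union_blocks:
  assumes "s J < r"
  shows "count_below (\<Union>j. P j) r \<le> 2 * real r / 2 ^ J"
proof -
  define J' where "J' = Max {j. s j < r}"
  have fin: "finite {j. s j < r}"
    by (rule finite_subset[of _ "{..<r}"]) (auto dest: order.strict_trans1[OF strict_mono_imp_increasing[OF s_mono]])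
  have "J \<le> J'" unfolding J'_def using fin assms by (intro Max_ge) auto
  have "J' \<in> {j. s j < r}" unfolding J'_def using fin assms by (intro Max_in) auto
  have "(\<Union>j. P j) \<inter> {..<r} \<subseteq> (\<Union>j<J'. P j) \<union> (P J' \<inter> {..<r})"
  proof
    fix x assume "x \<in> (\<Union>j. P j) \<inter> {..<r}"
    then obtain j where "x \<in> P j" "x < r" by blast
    then have "s j < r" using P_block[of j] by auto
    then have "j \<le> J'" unfolding J'_def using fin by (intro Max_ge) auto
    with \<open>x \<in> P j\<close> \<open>x < r\<close> show "x \<in> (\<Union>j<J'. P j) \<union> (P J' \<inter> {..<r})"
      by (cases "j = J'") auto
  qed
  then have "count_below (\<Union>j. P j) r \<le> real (card ((\<Union>j<J'. P j) \<union> (P J' \<inter> {..<r})))"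
    by (intro of_nat_mono card_mono) (auto intro: finite_subset[OF P_block])
  also have "\<dots> \<le> real (card (\<Union>j<J'. P j)) + count_below (P J') r"
    by (metis card_Un_le of_nat_add of_nat_mono)
  also have "\<dots> \<le> real r / 2 ^ J' + real r / 2 ^ J'"
  proof (rule add_mono)
    show "real (card (\<Union>j<J'. P j)) \<le> real r / 2 ^ J'"
      using card_UN_blocks[of J'] \<open>J' \<in> {j. s j < r}\<close> by (simp add: le_divide_eq)
  qed (rule P_sparse)
  also have "\<dots> \<le> 2 * real r / 2 ^ J"
    using \<open>J \<le> J'\<close> by (simp add: divide_left_mono power_increasing)
  finally show ?thesis .
qed

lemma density_zero_Union_blocks: "density_zero (\<Union>j. P j)"
  unfolding density_zero_def
proof (intro allI impI)
  fix e :: real assume "e > 0"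
  then obtain J where J: "(1 / 2) ^ J < e / 2" using real_arch_pow_inv[of "e / 2" "1 / 2"] by auto
  have "count_below (\<Union>j. P j) r \<le> e * real r" if "r \<ge> Suc (s J)" for r
  proof -
    have "count_below (\<Union>j. P j) r \<le> 2 * real r * (1 / 2) ^ J"
      using count_below_Union_blocks[of J r] that by (simp add: power_one_over)
    also have "\<dots> \<le> 2 * real r * (e / 2)" using J by (intro mult_left_mono) auto
    finally show ?thesis by (simp add: mult.commute)
  qed
  then show "\<exists>R. \<forall>r\<ge>R. count_below (\<Union>j. P j) r \<le> e * real r" by blast
qed

end

lemma bad_imp_not_in_C:
  assumes "bad m g"
  shows "\<not> in_C m g"
proof -
  obtain \<epsilon> :: real where "\<epsilon> > 0" and "\<forall>i. \<exists>n t A. n \<ge> i \<and> t \<ge> i \<and> A \<subseteq> {i..<n} \<and>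
      (\<forall>r. count_below A r \<le> real r / 2 ^ i) \<and> \<epsilon> * real t \<le> count_below (img m g A) t"
    using assms unfolding bad_def by blast
  then obtain n t A where n: "\<And>i. n i \<ge> i" and "\<And>i. t i \<ge> i" and A_block: "\<And>i. A i \<subseteq> {i..<n i}"
    and A_sparse: "\<And>i r. count_below (A i) r \<le> real r / 2 ^ i"
    and img_dense: "\<And>i. \<epsilon> * real (t i) \<le> count_below (img m g (A i)) (t i)"
    by metis
  define s where "s = rec_nat 0 (\<lambda>j sj. 2 ^ Suc j * n sj + 1)"
  have s_Suc: "s (Suc j) = 2 ^ Suc j * n (s j) + 1" for j unfolding s_def by simp
  have "s j < s (Suc j)" for j
  proof -
    have "s j \<le> n (s j)" by (rule n)
    also have "\<dots> \<le> 2 ^ Suc j * n (s j)" by simp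
    finally show ?thesis unfolding s_Suc by simp
  qed
  then have "strict_mono s" by (simp add: strict_mono_Suc_iff)
  have "density_zero (\<Union>j. A (s j))"
  proof (rule density_zero_Union_blocks[where b = "n \<circ> s"])
    show "count_below (A (s j)) r \<le> real r / 2 ^ j" for j r
    proof -
      have "real r / 2 ^ s j \<le> real r / 2 ^ j"
        using strict_mono_imp_increasing[OF \<open>strict_mono s\<close>, of j]
        by (intro divide_left_mono power_increasing) auto
      with A_sparse[of "s j" r] show ?thesis by (rule order_trans)
    qed
  qed (use \<open>strict_mono s\<close> n A_block s_Suc in auto)
  moreover have "\<not> density_zero (img m g (\<Union>j. A (s j)))"
    unfolding not_density_zero_iff
  proof (intro exI[of _ \<epsilon>] conjI allI)
    fix i
    have "img m g (A (s i)) \<subseteq> img m g (\<Union>j. A (s j))" by (intro img_mono) auto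
    then have "\<epsilon> * real (t (s i)) \<le> count_below (img m g (\<Union>j. A (s j))) (t (s i))"
      using img_dense[of "s i"] count_below_mono order_trans by blast
    moreover have "t (s i) \<ge> i"
      using \<open>\<And>i. t i \<ge> i\<close>[of "s i"] strict_mono_imp_increasing[OF \<open>strict_mono s\<close>, of i] by linarith
    ultimately show "\<exists>t'\<ge>i. \<epsilon> * real t' \<le> count_below (img m g (\<Union>j. A (s j))) t'" by blast
  qed (fact \<open>\<epsilon> > 0\<close>)
  ultimately show ?thesis unfolding in_C_iff_density_zero by blast
qed

lemma shadow_not_in_C: "shadow k f m g \<Longrightarrow> \<not> in_C m g \<Longrightarrow> \<not> in_C k f"
  unfolding shadow_def using shadow_l_not_in_C by blast

lemma shadow_arity_pos: "shadow k f m g \<Longrightarrow> m \<ge> 1"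
  unfolding shadow_def shadow_l_def by auto

theorem mainTheorem6:
  fixes k :: nat and f :: "nat list \<Rightarrow> nat"
  assumes "k \<ge> 1"
  shows "(\<not> in_C k f \<longleftrightarrow> (\<exists>m g. shadow k f m g \<and> minimal m g))
       \<and> (\<not> in_C k f \<longleftrightarrow> (\<exists>m g. shadow k f m g \<and> bad m g))
       \<and> (\<not> in_C k f \<longleftrightarrow> (\<exists>m g. shadow k f m g \<and> \<not> in_C m g))"
proof -
  have a_b: "\<not> in_C k f \<Longrightarrow> \<exists>m g. shadow k f m g \<and> minimal m g"
    using exists_minimal_shadow[OF assms] .
  have b_c: "shadow k f m g \<and> bad m g" if "shadow k f m g" and "minimal m g" for m g
    using that minimal_imp_bad shadow_arity_pos by blast
  have c_d: "\<not> in_C m g" if "bad m g" for m g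
    using that by (rule bad_imp_not_in_C)
  show ?thesis
    using a_b b_c c_d shadow_not_in_C unfolding minimal_def by blast
qed

end
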